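(* Let $p,p'\in\mathbb{N}$ and let $Q,Q'$ be λ-terms. If $\lambda y.Q\in\mathcal{E}_p$ and $BT(Q)\le^\eta_{p'}BT(Q')$, then $\lambda y.Q'\in\mathcal{E}_{p+p'}$.
   Context: $\mathtt{I}=\lambda x.x$; $\mathcal{E}$ is the set of λ-terms $Q$ with $Q\twoheadrightarrow_{\beta\eta}\mathtt{I}$. Size on β-normal forms: $|Q|=0$ if $Q\twoheadrightarrow_\beta\mathtt{I}$, and $|Q|=\max\{m,\max_{i\le m}|\lambda z_i.Q_i|+1\}$ if $Q\twoheadrightarrow_\beta\lambda yz_1\dots z_m.yQ_1\cdots Q_m$; $\mathcal{E}_p=\{Q\in\mathcal{E}:|Q|<p\}$. Böhm-like trees: coinductively generated by $U::=\bot\mid\lambda x_1\dots x_n.yU_1\cdots U_k$. The relation $\le^\eta_p$ is the greatest relation on Böhm-like trees such that $U\le^\eta_pV$ implies either $U=V=\bot$, or $U=\lambda\vec x.yU_1\cdots U_k$ and $V=\lambda\vec xz_1\dots z_m.yV_1\cdots V_kQ_1\cdots Q_m$ with $m\le p$, the $z_\ell$ not free in $yU_1\cdots U_kV_1\cdots V_k$, each $Q_i$ the Böhm tree of a term $Q'_i$ with $\lambda z_i.Q'_i\in\mathcal{E}_p$, and $U_j\le^\eta_pV_j$ for all $j\le k$. *)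

theory Defs
  imports Main
begin

datatype lterm = Var nat | App lterm lterm | Abs lterm

fun rename :: "(nat \<Rightarrow> nat) \<Rightarrow> lterm \<Rightarrow> lterm" where
  "rename f (Var k) = Var (f k)"
| "rename f (App s t) = App (rename f s) (rename f t)"
| "rename f (Abs t) = Abs (rename (\<lambda>k. case k of 0 \<Rightarrow> 0 | Suc k' \<Rightarrow> Suc (f k')) t)"

definition lift :: "lterm \<Rightarrow> lterm" where
  "lift t = rename Suc t"

fun subst :: "lterm \<Rightarrow> nat \<Rightarrow> lterm \<Rightarrow> lterm" where
  "subst (Var i) k s = (if i < k then Var i else if i = k then s else Var (i - 1))"
| "subst (App t u) k s = App (subst t k s) (subst u k s)"
| "subst (Abs t) k s = Abs (subst t (Suc k) (lift s))"

inductive beta :: "lterm \<Rightarrow> lterm \<Rightarrow> bool" where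
  beta_redex: "beta (App (Abs t) s) (subst t 0 s)"
| beta_appL: "beta s s' \<Longrightarrow> beta (App s t) (App s' t)"
| beta_appR: "beta t t' \<Longrightarrow> beta (App s t) (App s t')"
| beta_abs: "beta t t' \<Longrightarrow> beta (Abs t) (Abs t')"

text \<open>eta: \<lambda>x. M x \<rightarrow> M with x not free in M (i.e. the body is a lifted term).\<close>
inductive eta :: "lterm \<Rightarrow> lterm \<Rightarrow> bool" where
  eta_redex: "eta (Abs (App (lift t) (Var 0))) t"
| eta_appL: "eta s s' \<Longrightarrow> eta (App s t) (App s' t)"
| eta_appR: "eta t t' \<Longrightarrow> eta (App s t) (App s t')"
| eta_abs: "eta t t' \<Longrightarrow> eta (Abs t) (Abs t')"

abbreviation beta_star :: "lterm \<Rightarrow> lterm \<Rightarrow> bool" where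
  "beta_star \<equiv> beta\<^sup>*\<^sup>*"

abbreviation betaeta_star :: "lterm \<Rightarrow> lterm \<Rightarrow> bool" where
  "betaeta_star \<equiv> (\<lambda>a b. beta a b \<or> eta a b)\<^sup>*\<^sup>*"

definition absn :: "nat \<Rightarrow> lterm \<Rightarrow> lterm" where
  "absn n t = (Abs ^^ n) t"

definition apps :: "lterm \<Rightarrow> lterm list \<Rightarrow> lterm" where
  "apps h ts = foldl App h ts"

definition Id_term :: lterm where
  "Id_term = Abs (Var 0)"

text \<open>abstract_var j M = \<lambda>z. M where z is the free variable with index j of M.\<close>
definition abstract_var :: "nat \<Rightarrow> lterm \<Rightarrow> lterm" where
  "abstract_var j M = Abs (rename (\<lambda>k. if k = j then 0 else Suc k) M)"

definition E :: "lterm set" where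
  "E = {Q. betaeta_star Q Id_term}"

text \<open>esize Q s: |Q| = s. Head y is the outermost binder (index m under m+1 binders);
  z_(i+1) has index m-1-i.\<close>
inductive esize :: "lterm \<Rightarrow> nat \<Rightarrow> bool" where
  esize_id: "beta_star Q Id_term \<Longrightarrow> esize Q 0"
| esize_exp: "beta_star Q (absn (Suc m) (apps (Var m) Qs)) \<Longrightarrow> length Qs = m \<Longrightarrow> length ss = m
    \<Longrightarrow> (\<forall>i<m. esize (abstract_var (m - 1 - i) (Qs ! i)) (ss ! i))
    \<Longrightarrow> esize Q (max m (Max (insert 0 (Suc ` set ss))))"

definition E_p :: "nat \<Rightarrow> lterm set" where
  "E_p p = {Q \<in> E. \<exists>s. esize Q s \<and> s < p}"

text \<open>Node n y Us = \<lambda>x1..xn. y U1 .. Uk (y a de Bruijn index under the n binders).\<close>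
codatatype bt = Bot | Node nat nat "bt list"

definition hnf_data :: "lterm \<Rightarrow> (nat \<times> nat \<times> lterm list) option" where
  "hnf_data Q = (if \<exists>n y Ms. beta_star Q (absn n (apps (Var y) Ms))
     then Some (SOME (n, y, Ms). beta_star Q (absn n (apps (Var y) Ms))) else None)"

primcorec BT :: "lterm \<Rightarrow> bt" where
  "BT Q = (case hnf_data Q of None \<Rightarrow> Bot
             | Some d \<Rightarrow> Node (fst d) (fst (snd d)) (map BT (snd (snd d))))"

primcorec shift_bt :: "nat \<Rightarrow> nat \<Rightarrow> bt \<Rightarrow> bt" where
  "shift_bt c d U = (case U of Bot \<Rightarrow> Bot
     | Node n y Us \<Rightarrow> Node n (if y < c + n then y else y + d) (map (shift_bt (c + n) d) Us))"

coinductive bt_le_eta :: "nat \<Rightarrow> bt \<Rightarrow> bt \<Rightarrow> bool" for p :: nat where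
  le_bot: "bt_le_eta p Bot Bot"
| le_node: "m \<le> p \<Longrightarrow> length Vs = length Us \<Longrightarrow> list_all2 (bt_le_eta p) Us Vs
    \<Longrightarrow> length Qs = m
    \<Longrightarrow> (\<forall>i<m. \<exists>Q'. Qs ! i = BT Q' \<and> abstract_var (m - 1 - i) Q' \<in> E_p p)
    \<Longrightarrow> bt_le_eta p (Node n y Us) (Node (n + m) (y + m) (map (shift_bt 0 m) Vs @ Qs))"

end

theory Submission
  imports Defs
begin

text \<open>Induction on the derivation of \<open>|\<lambda>y. Q| = s\<close>. The head normal form of \<open>Q\<close> is
  \<open>\<lambda>x\<^sub>1\<dots>x\<^sub>n. y Q\<^sub>1 \<dots> Q\<^sub>n\<close> with all \<open>|\<lambda>x\<^sub>i. Q\<^sub>i| < s\<close>. By confluence,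
  \<open>BT Q \<le>\<^sup>\<eta>\<^bsub>p'\<^esub> BT Q'\<close> forces \<open>Q'\<close> to have a head normal form
  \<open>\<lambda>x\<^sub>1\<dots>x\<^sub>n z\<^sub>1\<dots>z\<^sub>m. y Q'\<^sub>1 \<dots> Q'\<^sub>n R\<^sub>1 \<dots> R\<^sub>m\<close> with \<open>m \<le> p'\<close>,
  \<open>BT Q\<^sub>i \<le>\<^sup>\<eta>\<^bsub>p'\<^esub> BT Q'\<^sub>i\<close> and each \<open>\<lambda>z\<^sub>j. R\<^sub>j\<close> an eta-expansion of size \<open>< p'\<close>.
  Inductively each \<open>\<lambda>x\<^sub>i. Q'\<^sub>i\<close> is an eta-expansion of size at most \<open>|\<lambda>x\<^sub>i. Q\<^sub>i| + p'\<close>,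
  so \<open>\<lambda>y. Q'\<close> is an eta-expansion with \<open>n + m \<le> s + p'\<close> arguments, each of size at most
  \<open>s + p' - 1\<close>.\<close>

section \<open>Renaming and parallel substitution\<close>

definition ren_under :: "nat \<Rightarrow> (nat \<Rightarrow> nat) \<Rightarrow> nat \<Rightarrow> nat" where
  "ren_under n f i = (if i < n then i else n + f (i - n))"

lemma rename_Abs_ren_under [simp]: "rename f (Abs t) = Abs (rename (ren_under 1 f) t)"
proof -
  have "(\<lambda>k. case k of 0 \<Rightarrow> 0 | Suc k' \<Rightarrow> Suc (f k')) = ren_under 1 f"
    by (auto simp: ren_under_def fun_eq_iff split: nat.split)
  then show ?thesis by simp
qed

declare rename.simps(3) [simp del]

lemma ren_under_0 [simp]: "ren_under 0 f = f"
  by (simp add: ren_under_def fun_eq_iff)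

lemma ren_under_add: "ren_under m (ren_under n f) = ren_under (m + n) f"
  by (auto simp: ren_under_def fun_eq_iff)

lemma ren_under_comp: "ren_under n f \<circ> ren_under n g = ren_under n (f \<circ> g)"
  by (auto simp: ren_under_def fun_eq_iff)

lemma ren_under_id [simp]: "ren_under n id = id" "ren_under n (\<lambda>x. x) = (\<lambda>x. x)"
  by (auto simp: ren_under_def fun_eq_iff)

lemma inj_ren_under: "inj f \<Longrightarrow> inj (ren_under n f)"
  unfolding inj_def ren_under_def by (metis add_diff_cancel_left' diff_add le_add1 not_le)

lemma rename_comp: "rename f (rename g t) = rename (f \<circ> g) t"
  by (induction t arbitrary: f g) (auto simp: ren_under_comp)

lemma rename_id [simp]: "rename id t = t"
  by (induction t) (auto simp: id_def)

definition up_sub :: "(nat \<Rightarrow> lterm) \<Rightarrow> nat \<Rightarrow> lterm" where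
  "up_sub \<sigma> i = (case i of 0 \<Rightarrow> Var 0 | Suc j \<Rightarrow> lift (\<sigma> j))"

fun psubst :: "(nat \<Rightarrow> lterm) \<Rightarrow> lterm \<Rightarrow> lterm" where
  "psubst \<sigma> (Var i) = \<sigma> i"
| "psubst \<sigma> (App s t) = App (psubst \<sigma> s) (psubst \<sigma> t)"
| "psubst \<sigma> (Abs t) = Abs (psubst (up_sub \<sigma>) t)"

lemma rename_eq_psubst: "rename f t = psubst (Var \<circ> f) t"
proof (induction t arbitrary: f)
  case (Abs t)
  have "up_sub (\<lambda>a. Var (f a)) = (\<lambda>a. Var (ren_under 1 f a))"
    by (auto simp: up_sub_def fun_eq_iff lift_def ren_under_def split: nat.split)
  then show ?case using Abs by simp
qed auto

lemma rename_psubst: "rename f (psubst \<sigma> t) = psubst (rename f \<circ> \<sigma>) t"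
proof (induction t arbitrary: f \<sigma>)
  case (Abs t)
  have "(\<lambda>a. rename (ren_under 1 f) (up_sub \<sigma> a)) = up_sub (\<lambda>a. rename f (\<sigma> a))"
    by (auto simp: up_sub_def fun_eq_iff lift_def rename_comp split: nat.split)
       (auto simp: ren_under_def o_def)
  then show ?case using Abs by simp
qed auto

lemma psubst_rename: "psubst \<sigma> (rename f t) = psubst (\<sigma> \<circ> f) t"
proof (induction t arbitrary: f \<sigma>)
  case (Abs t)
  have "(\<lambda>a. up_sub \<sigma> (ren_under 1 f a)) = up_sub (\<lambda>a. \<sigma> (f a))"
    by (auto simp: up_sub_def fun_eq_iff ren_under_def split: nat.split)
  then show ?case using Abs by simp
qed auto

lemma psubst_psubst: "psubst \<sigma> (psubst \<tau> t) = psubst (psubst \<sigma> \<circ> \<tau>) t"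
proof (induction t arbitrary: \<sigma> \<tau>)
  case (Abs t)
  have "(\<lambda>a. psubst (up_sub \<sigma>) (up_sub \<tau> a)) = up_sub (\<lambda>a. psubst \<sigma> (\<tau> a))"
    by (auto simp: up_sub_def fun_eq_iff lift_def psubst_rename rename_psubst split: nat.split)
       (auto simp: up_sub_def o_def lift_def)
  then show ?case using Abs by simp
qed auto

lemma psubst_Var [simp]: "psubst Var t = t"
  using rename_eq_psubst[of id t] by simp

definition subst_sub :: "nat \<Rightarrow> lterm \<Rightarrow> nat \<Rightarrow> lterm" where
  "subst_sub k s i = (if i < k then Var i else if i = k then s else Var (i - 1))"

lemma subst_eq_psubst: "subst t k s = psubst (subst_sub k s) t"
proof (induction t arbitrary: k s)
  case (Abs t)
  have "up_sub (subst_sub k s) = subst_sub (Suc k) (lift s)"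
    by (auto simp: up_sub_def fun_eq_iff subst_sub_def lift_def split: nat.split)
  then show ?case using Abs by simp
qed (auto simp: subst_sub_def)

lemma subst_sub_0_comp_Suc [simp]: "subst_sub 0 s \<circ> Suc = Var"
  by (auto simp: subst_sub_def fun_eq_iff)

lemma rename_subst0: "rename f (subst t 0 s) = subst (rename (ren_under 1 f) t) 0 (rename f s)"
  unfolding subst_eq_psubst rename_eq_psubst psubst_psubst
  by (rule arg_cong[where f="\<lambda>\<sigma>. psubst \<sigma> t"]) (auto simp: fun_eq_iff subst_sub_def ren_under_def)

lemma psubst_subst0: "psubst \<sigma> (subst t 0 s) = subst (psubst (up_sub \<sigma>) t) 0 (psubst \<sigma> s)"
  unfolding subst_eq_psubst psubst_psubst
  by (rule arg_cong[where f="\<lambda>\<sigma>. psubst \<sigma> t"])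
     (auto simp: fun_eq_iff subst_sub_def up_sub_def lift_def psubst_rename split: nat.split)

section \<open>Confluence of beta-reduction\<close>

lemma beta_star_AppL: "beta_star s s' \<Longrightarrow> beta_star (App s t) (App s' t)"
  by (induction rule: rtranclp_induct) (auto intro: rtranclp.rtrancl_into_rtrancl beta.intros)

lemma beta_star_AppR: "beta_star t t' \<Longrightarrow> beta_star (App s t) (App s t')"
  by (induction rule: rtranclp_induct) (auto intro: rtranclp.rtrancl_into_rtrancl beta.intros)

lemma beta_star_App: "beta_star s s' \<Longrightarrow> beta_star t t' \<Longrightarrow> beta_star (App s t) (App s' t')"
  by (meson beta_star_AppL beta_star_AppR rtranclp_trans)

lemma beta_star_Abs: "beta_star t t' \<Longrightarrow> beta_star (Abs t) (Abs t')"
  by (induction rule: rtranclp_induct) (auto intro: rtranclp.rtrancl_into_rtrancl beta.intros)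

inductive pbeta :: "lterm \<Rightarrow> lterm \<Rightarrow> bool" where
  pbeta_Var: "pbeta (Var i) (Var i)"
| pbeta_Abs: "pbeta t t' \<Longrightarrow> pbeta (Abs t) (Abs t')"
| pbeta_App: "pbeta s s' \<Longrightarrow> pbeta t t' \<Longrightarrow> pbeta (App s t) (App s' t')"
| pbeta_redex: "pbeta s s' \<Longrightarrow> pbeta t t' \<Longrightarrow> pbeta (App (Abs s) t) (subst s' 0 t')"

lemma pbeta_refl [simp, intro]: "pbeta t t"
  by (induction t) (auto intro: pbeta.intros)

lemma pbeta_rename: "pbeta t t' \<Longrightarrow> pbeta (rename f t) (rename f t')"
proof (induction arbitrary: f rule: pbeta.induct)
  case (pbeta_redex s s' t t')
  then show ?case by (simp add: rename_subst0 pbeta.pbeta_redex)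
qed (auto intro: pbeta.intros)

lemma pbeta_up_sub: "\<forall>i. pbeta (\<sigma> i) (\<sigma>' i) \<Longrightarrow> pbeta (up_sub \<sigma> i) (up_sub \<sigma>' i)"
  by (auto simp: up_sub_def lift_def pbeta_rename split: nat.split)

lemma pbeta_psubst:
  "pbeta t t' \<Longrightarrow> \<forall>i. pbeta (\<sigma> i) (\<sigma>' i) \<Longrightarrow> pbeta (psubst \<sigma> t) (psubst \<sigma>' t')"
proof (induction arbitrary: \<sigma> \<sigma>' rule: pbeta.induct)
  case (pbeta_redex s s' t t')
  then show ?case by (auto simp: psubst_subst0 pbeta_up_sub intro: pbeta.intros)
qed (auto simp: pbeta_up_sub intro: pbeta.intros)

lemma pbeta_subst0: "pbeta s s' \<Longrightarrow> pbeta t t' \<Longrightarrow> pbeta (subst s 0 t) (subst s' 0 t')"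
  unfolding subst_eq_psubst by (erule pbeta_psubst) (auto simp: subst_sub_def)

fun complete_dev :: "lterm \<Rightarrow> lterm" where
  "complete_dev (Var i) = Var i"
| "complete_dev (Abs t) = Abs (complete_dev t)"
| "complete_dev (App (Abs s) t) = subst (complete_dev s) 0 (complete_dev t)"
| "complete_dev (App s t) = App (complete_dev s) (complete_dev t)"

lemma pbeta_Abs_inv: "pbeta (Abs s) u \<Longrightarrow> \<exists>s'. u = Abs s' \<and> pbeta s s'"
  by (cases rule: pbeta.cases) auto

text \<open>Takahashi's triangle property, which yields the diamond property of \<open>pbeta\<close>.\<close>

lemma pbeta_complete_dev: "pbeta t t' \<Longrightarrow> pbeta t' (complete_dev t)"
proof (induction rule: pbeta.induct)
  case (pbeta_App s s' t t')
  show ?case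
  proof (cases s)
    case (Abs s0)
    then obtain s1 where "s' = Abs s1" "pbeta s0 s1" using pbeta_App pbeta_Abs_inv by blast
    moreover have "pbeta s1 (complete_dev s0)" using pbeta_App.IH(1) Abs \<open>s' = Abs s1\<close>
      by (auto dest: pbeta_Abs_inv)
    ultimately show ?thesis using Abs pbeta_App by (auto intro: pbeta.intros)
  qed (use pbeta_App in \<open>auto intro: pbeta.intros\<close>)
qed (auto intro: pbeta.intros pbeta_subst0)

lemma pbeta_star_strip:
  "pbeta\<^sup>*\<^sup>* a b \<Longrightarrow> pbeta a c \<Longrightarrow> \<exists>d. pbeta b d \<and> pbeta\<^sup>*\<^sup>* c d"
proof (induction arbitrary: c rule: rtranclp_induct)
  case (step b b')
  then obtain d where "pbeta b d" "pbeta\<^sup>*\<^sup>* c d" by blast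
  then have "pbeta d (complete_dev b)" "pbeta b' (complete_dev b)"
    using pbeta_complete_dev step by auto
  then show ?case using \<open>pbeta\<^sup>*\<^sup>* c d\<close> by (meson rtranclp.rtrancl_into_rtrancl)
qed auto

lemma pbeta_star_confluent:
  "pbeta\<^sup>*\<^sup>* a c \<Longrightarrow> pbeta\<^sup>*\<^sup>* a b \<Longrightarrow> \<exists>d. pbeta\<^sup>*\<^sup>* b d \<and> pbeta\<^sup>*\<^sup>* c d"
proof (induction arbitrary: b rule: rtranclp_induct)
  case (step c c')
  then obtain d where "pbeta\<^sup>*\<^sup>* b d" "pbeta\<^sup>*\<^sup>* c d" by blast
  then obtain d' where "pbeta d d'" "pbeta\<^sup>*\<^sup>* c' d'" using pbeta_star_strip step by blast
  then show ?case using \<open>pbeta\<^sup>*\<^sup>* b d\<close> by (meson rtranclp.rtrancl_into_rtrancl)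
qed auto

lemma pbeta_beta_star: "pbeta s t \<Longrightarrow> beta_star s t"
proof (induction rule: pbeta.induct)
  case (pbeta_redex s s' t t')
  then have "beta_star (App (Abs s) t) (App (Abs s') t')" by (simp add: beta_star_Abs beta_star_App)
  then show ?case by (meson beta.beta_redex rtranclp.rtrancl_into_rtrancl)
qed (auto intro: beta_star_Abs beta_star_App)

lemma beta_pbeta: "beta s t \<Longrightarrow> pbeta s t"
  by (induction rule: beta.induct) (auto intro: pbeta.intros)

lemma beta_star_eq_pbeta_star: "beta_star = pbeta\<^sup>*\<^sup>*"
proof (intro ext iffI)
  fix a b assume "beta_star a b" then show "pbeta\<^sup>*\<^sup>* a b"
    by (induction rule: rtranclp_induct) (auto intro: rtranclp.rtrancl_into_rtrancl beta_pbeta)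
next
  fix a b assume "pbeta\<^sup>*\<^sup>* a b" then show "beta_star a b"
    by (induction rule: rtranclp_induct) (auto intro: rtranclp_trans pbeta_beta_star)
qed

lemma beta_star_confluent:
  "beta_star a b \<Longrightarrow> beta_star a c \<Longrightarrow> \<exists>d. beta_star b d \<and> beta_star c d"
  unfolding beta_star_eq_pbeta_star using pbeta_star_confluent by blast

lemma absn_0 [simp]: "absn 0 t = t"
  by (simp add: absn_def)

lemma absn_Suc: "absn (Suc n) t = Abs (absn n t)"
  by (simp add: absn_def)

lemma absn_Suc_inner: "absn (Suc n) t = absn n (Abs t)"
  by (simp add: absn_def funpow_Suc_right del: funpow.simps)

lemma apps_Nil [simp]: "apps h [] = h"
  by (simp add: apps_def)

lemma apps_snoc [simp]: "apps h (ts @ [t]) = App (apps h ts) t"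
  by (simp add: apps_def)

lemma rename_absn: "rename f (absn n t) = absn n (rename (ren_under n f) t)"
  by (induction n arbitrary: f) (auto simp: absn_Suc ren_under_add)

lemma rename_apps: "rename f (apps h ts) = apps (rename f h) (map (rename f) ts)"
  by (induction ts rule: rev_induct) auto

lemma apps_Var_neq_Abs [simp]: "apps (Var y) ts \<noteq> Abs t" "Abs t \<noteq> apps (Var y) ts"
  by (induction ts rule: rev_induct) auto

lemma apps_Var_eq_iff: "apps (Var y) ts = apps (Var y') ts' \<longleftrightarrow> y = y' \<and> ts = ts'"
proof (induction ts arbitrary: ts' rule: rev_induct)
  case Nil then show ?case by (cases ts' rule: rev_exhaust) auto
next
  case (snoc x xs) then show ?case by (cases ts' rule: rev_exhaust) auto
qed

lemma hnf_eqD: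
  "absn n (apps (Var y) ts) = absn n' (apps (Var y') ts') \<Longrightarrow> n = n' \<and> y = y' \<and> ts = ts'"
proof (induction n arbitrary: n')
  case 0 then show ?case
    by (cases n') (auto simp: absn_Suc apps_Var_eq_iff dest: sym)
next
  case (Suc n) then show ?case
    by (cases n') (auto simp: absn_Suc apps_Var_eq_iff)
qed

lemma beta_star_Abs_inv: "beta_star (Abs t) u \<Longrightarrow> \<exists>t'. u = Abs t' \<and> beta_star t t'"
proof (induction rule: rtranclp_induct)
  case (step y z)
  then obtain t' where "y = Abs t'" "beta_star t t'" by blast
  moreover from step(2) this(1) obtain t'' where "z = Abs t''" "beta t' t''"
    by (cases rule: beta.cases) auto
  ultimately show ?case by (blast intro: rtranclp.rtrancl_into_rtrancl)
qed auto

lemma beta_apps_Var_inv: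
  "beta (apps (Var y) ts) u \<Longrightarrow> \<exists>ts'. u = apps (Var y) ts' \<and> list_all2 beta_star ts ts'"
proof (induction ts arbitrary: u rule: rev_induct)
  case Nil then show ?case by (auto elim: beta.cases)
next
  case (snoc x xs)
  from snoc.prems have "beta (App (apps (Var y) xs) x) u" by simp
  then show ?case
  proof (cases rule: beta.cases)
    case (beta_appL s')
    then obtain ts' where "s' = apps (Var y) ts'" "list_all2 beta_star xs ts'"
      using snoc.IH by blast
    then show ?thesis using beta_appL
      by (intro exI[of _ "ts' @ [x]"]) (auto intro: list_all2_appendI)
  next
    case (beta_appR x')
    then show ?thesis
      by (intro exI[of _ "xs @ [x']"]) (auto intro: list_all2_appendI list_all2_refl)
  qed auto
qed

lemma beta_star_absn_inv: "beta_star (absn n t) u \<Longrightarrow> \<exists>t'. u = absn n t' \<and> beta_star t t'"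
  by (induction n arbitrary: u) (auto simp: absn_Suc dest!: beta_star_Abs_inv)

lemma beta_star_apps_Var_inv:
  "beta_star (apps (Var y) ts) u \<Longrightarrow> \<exists>ts'. u = apps (Var y) ts' \<and> list_all2 beta_star ts ts'"
proof (induction rule: rtranclp_induct)
  case (step u v)
  then obtain ts' where "u = apps (Var y) ts'" "list_all2 beta_star ts ts'" by blast
  moreover from step(2) this(1) obtain ts'' where
    "v = apps (Var y) ts''" "list_all2 beta_star ts' ts''"
    using beta_apps_Var_inv by blast
  ultimately show ?case by (blast intro: list_all2_trans rtranclp_trans)
qed (auto intro: list_all2_refl)

lemma beta_star_hnf_inv:
  "beta_star (absn n (apps (Var y) ts)) u
    \<Longrightarrow> \<exists>ts'. u = absn n (apps (Var y) ts') \<and> list_all2 beta_star ts ts'"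
  by (blast dest: beta_star_absn_inv beta_star_apps_Var_inv)

lemma rename_eq_absnD:
  "rename f t = absn n u \<Longrightarrow> \<exists>t0. t = absn n t0 \<and> u = rename (ren_under n f) t0"
proof (induction n arbitrary: f t u)
  case (Suc n)
  then obtain t0 where "t = Abs t0" "absn n u = rename (ren_under 1 f) t0"
    by (cases t) (auto simp: absn_Suc)
  then show ?case using Suc.IH[of "ren_under 1 f" t0 u] by (auto simp: absn_Suc ren_under_add)
qed auto

lemma rename_eq_apps_VarD:
  "rename f t = apps (Var y) ts \<Longrightarrow> \<exists>w ts0. t = apps (Var w) ts0 \<and> f w = y \<and> ts = map (rename f) ts0"
proof (induction ts arbitrary: t rule: rev_induct)
  case Nil then show ?case by (cases t) auto
next
  case (snoc x xs)
  then obtain a b where "t = App a b" "rename f a = apps (Var y) xs" "rename f b = x"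
    by (cases t) auto
  then show ?case using snoc.IH[of a] by (metis list.simps(8,9) map_append apps_snoc)
qed

lemma beta_rename: "beta t u \<Longrightarrow> beta (rename f t) (rename f u)"
proof (induction arbitrary: f rule: beta.induct)
  case (beta_redex t s) then show ?case by (simp add: rename_subst0 beta.beta_redex)
qed (auto intro: beta.intros)

lemma beta_star_rename: "beta_star t u \<Longrightarrow> beta_star (rename f t) (rename f u)"
  by (induction rule: rtranclp_induct) (auto intro: rtranclp.rtrancl_into_rtrancl beta_rename)

lemma beta_from_rename:
  "beta (rename f t) u \<Longrightarrow> \<exists>t'. beta t t' \<and> u = rename f t'"
proof (induction "rename f t" u arbitrary: f t rule: beta.induct)
  case (beta_redex s r)
  then obtain a b where t: "t = App a b" "rename f a = Abs s" "rename f b = r" by (cases t) auto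
  then obtain a0 where "a = Abs a0" "s = rename (ren_under 1 f) a0" by (cases a) auto
  then show ?case using t by (intro exI[of _ "subst a0 0 b"]) (auto simp: rename_subst0 beta.beta_redex)
next
  case (beta_appL s s' r)
  then obtain a b where t: "t = App a b" "rename f a = s" "rename f b = r" by (cases t) auto
  then show ?case using beta_appL.hyps(2)[of f a] by (auto intro: beta.intros)
next
  case (beta_appR r r' s)
  then obtain a b where t: "t = App a b" "rename f a = s" "rename f b = r" by (cases t) auto
  then show ?case using beta_appR.hyps(2)[of f b] by (auto intro: beta.intros)
next
  case (beta_abs s s')
  then obtain a where t: "t = Abs a" "rename (ren_under 1 f) a = s" by (cases t) auto
  then show ?case using beta_abs.hyps(2)[of "ren_under 1 f" a] by (auto intro: beta.intros)
qed

lemma beta_star_from_rename: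
  "beta_star (rename f t) u \<Longrightarrow> \<exists>t'. beta_star t t' \<and> u = rename f t'"
proof (induction rule: rtranclp_induct)
  case (step y z)
  then obtain t0 where "beta_star t t0" "y = rename f t0" by blast
  moreover then obtain t1 where "beta t0 t1" "z = rename f t1" using step(2) beta_from_rename by blast
  ultimately show ?case by (blast intro: rtranclp.rtrancl_into_rtrancl)
qed auto

section \<open>Eta-expansions of the identity\<close>

lemma betaeta_star_of_beta_star: "beta_star t u \<Longrightarrow> betaeta_star t u"
  by (induction rule: rtranclp_induct) (auto intro: rtranclp.rtrancl_into_rtrancl)

lemma betaeta_star_App:
  assumes "betaeta_star s s'" "betaeta_star t t'"
  shows "betaeta_star (App s t) (App s' t')"
proof -
  have "betaeta_star (App s t) (App s' t)"
    using assms(1) by (induction rule: rtranclp_induct)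
      (auto intro: rtranclp.rtrancl_into_rtrancl beta.intros eta.intros)
  moreover have "betaeta_star (App s' t) (App s' t')"
    using assms(2) by (induction rule: rtranclp_induct)
      (auto intro: rtranclp.rtrancl_into_rtrancl beta.intros eta.intros)
  ultimately show ?thesis by (rule rtranclp_trans)
qed

lemma betaeta_star_Abs: "betaeta_star t t' \<Longrightarrow> betaeta_star (Abs t) (Abs t')"
  by (induction rule: rtranclp_induct) (auto intro: rtranclp.rtrancl_into_rtrancl beta.intros eta.intros)

lemma betaeta_star_absn: "betaeta_star t t' \<Longrightarrow> betaeta_star (absn n t) (absn n t')"
  by (induction n) (auto simp: absn_Suc betaeta_star_Abs)

lemma betaeta_star_apps:
  "list_all2 betaeta_star ts ts' \<Longrightarrow> betaeta_star (apps h ts) (apps h ts')"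
proof (induction ts arbitrary: ts' rule: rev_induct)
  case (snoc x xs)
  then obtain ys y where "ts' = ys @ [y]" "list_all2 betaeta_star xs ys" "betaeta_star x y"
    by (auto simp: list_all2_append1 list_all2_Cons1)
  then show ?case using snoc by (auto intro: betaeta_star_App)
qed simp

lemma eta_expansion_Var:
  "betaeta_star (absn k (apps (Var (k + a)) (map (\<lambda>i. Var (k - 1 - i)) [0..<k]))) (Var a)"
proof (induction k)
  case (Suc k)
  let ?X = "apps (Var (k + a)) (map (\<lambda>i. Var (k - 1 - i)) [0..<k])"
  have "map (rename Suc) (map (\<lambda>i. Var (k - 1 - i)) [0..<k]) = map (\<lambda>i. Var (k - i)) [0..<k]"
    by (auto simp: list_eq_iff_nth_eq)
  then have "lift ?X = apps (Var (Suc (k + a))) (map (\<lambda>i. Var (k - i)) [0..<k])"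
    by (simp only: lift_def rename_apps rename.simps(1))
  then have "apps (Var (Suc k + a)) (map (\<lambda>i. Var (Suc k - 1 - i)) [0..<Suc k])
      = App (lift ?X) (Var 0)"
    by simp
  then have "absn (Suc k) (apps (Var (Suc k + a)) (map (\<lambda>i. Var (Suc k - 1 - i)) [0..<Suc k]))
      = absn k (Abs (App (lift ?X) (Var 0)))"
    by (simp only: absn_Suc_inner)
  moreover have "betaeta_star (absn k (Abs (App (lift ?X) (Var 0)))) (absn k ?X)"
    by (rule betaeta_star_absn) (auto intro: eta.eta_redex)
  ultimately show ?case using Suc.IH by (simp add: rtranclp_trans)
qed simp

definition abs_ren :: "nat \<Rightarrow> nat \<Rightarrow> nat" where
  "abs_ren j k = (if k = j then 0 else Suc k)"

lemma abstract_var_abs_ren: "abstract_var j B = Abs (rename (abs_ren j) B)"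
  by (simp add: abstract_var_def abs_ren_def[abs_def])

lemma inj_abs_ren: "inj (abs_ren j)"
  by (auto simp: inj_def abs_ren_def)

lemma abs_ren_eq_0_iff: "abs_ren j k = 0 \<longleftrightarrow> k = j"
  by (simp add: abs_ren_def)

lemma rename_ren_under_abstract_var:
  "a < k \<Longrightarrow> rename (ren_under k f) (abstract_var a B) = abstract_var a (rename (ren_under k f) B)"
proof -
  assume "a < k"
  then have "ren_under 1 (ren_under k f) \<circ> abs_ren a = abs_ren a \<circ> ren_under k f"
    by (auto simp: fun_eq_iff ren_under_def abs_ren_def)
  then show ?thesis by (simp add: abstract_var_abs_ren rename_comp)
qed

lemma esize_rename: "esize T s \<Longrightarrow> esize (rename f T) s"
proof (induction arbitrary: f rule: esize.induct)
  case (esize_id Q)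
  have "beta_star (rename f Q) Id_term"
    using beta_star_rename[OF esize_id.hyps, of f] by (simp add: Id_term_def ren_under_def)
  then show ?case by (rule esize.esize_id)
next
  case (esize_exp Q m Qs ss)
  let ?F = "ren_under (Suc m) f"
  have "?F m = m" by (simp add: ren_under_def)
  then have "beta_star (rename f Q) (absn (Suc m) (apps (Var m) (map (rename ?F) Qs)))"
    using beta_star_rename[OF esize_exp.hyps(1), of f] by (simp add: rename_absn rename_apps)
  moreover have "esize (abstract_var (m - 1 - i) (map (rename ?F) Qs ! i)) (ss ! i)" if "i < m" for i
  proof -
    have "esize (rename ?F (abstract_var (m - 1 - i) (Qs ! i))) (ss ! i)"
      using esize_exp.IH that by blast
    then show ?thesis
      using rename_ren_under_abstract_var[of "m - 1 - i" "Suc m" f "Qs ! i"] that esize_exp.hyps(2)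
      by simp
  qed
  ultimately show ?case
    using esize.esize_exp[of "rename f Q" m "map (rename ?F) Qs" ss] esize_exp.hyps(2,3) by simp
qed

lemma esize_Abs_rename_cong:
  assumes "esize (Abs (rename \<phi> B)) s" "inj \<phi>" "\<And>k. \<psi> k = 0 \<longleftrightarrow> \<phi> k = 0"
  shows "esize (Abs (rename \<psi> B)) s"
proof -
  define f where "f x = \<psi> (inv \<phi> (Suc x)) - 1" for x
  have "ren_under 1 f \<circ> \<phi> = \<psi>"
  proof
    fix k show "(ren_under 1 f \<circ> \<phi>) k = \<psi> k"
    proof (cases "\<phi> k")
      case 0 then show ?thesis using assms(3) by (simp add: ren_under_def)
    next
      case (Suc x)
      then have "inv \<phi> (Suc x) = k" using inv_f_f[OF assms(2), of k] by simp
      moreover have "\<psi> k \<noteq> 0" using assms(3) Suc by simp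
      ultimately show ?thesis using Suc by (simp add: ren_under_def f_def)
    qed
  qed
  then show ?thesis using esize_rename[OF assms(1), of f] by (simp add: rename_comp)
qed

definition beta_joinable :: "lterm \<Rightarrow> lterm \<Rightarrow> bool" where
  "beta_joinable A B \<longleftrightarrow> (\<exists>C. beta_star A C \<and> beta_star B C)"

lemma beta_joinable_refl [simp]: "beta_joinable A A"
  by (auto simp: beta_joinable_def)

lemma beta_joinable_hnf:
  assumes "beta_star A (absn n (apps (Var y) Ms))" "beta_joinable A B"
  shows "\<exists>Ms'. beta_star B (absn n (apps (Var y) Ms')) \<and> list_all2 beta_star Ms Ms'"
proof -
  obtain C where C: "beta_star A C" "beta_star B C" using assms(2) by (auto simp: beta_joinable_def)
  obtain D where D: "beta_star (absn n (apps (Var y) Ms)) D" "beta_star C D"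
    using beta_star_confluent[OF assms(1) C(1)] by blast
  then obtain Ms' where "D = absn n (apps (Var y) Ms')" "list_all2 beta_star Ms Ms'"
    using beta_star_hnf_inv by blast
  then show ?thesis using C(2) D(2) by (meson rtranclp_trans)
qed

lemma beta_joinable_hnf_unique:
  assumes "beta_star A (absn n (apps (Var y) Ms))" "beta_joinable A B"
    and "beta_star B (absn n' (apps (Var y') Ms'))"
  shows "n' = n \<and> y' = y \<and> list_all2 beta_joinable Ms Ms'"
proof -
  obtain Ms1 where Ms1: "beta_star B (absn n (apps (Var y) Ms1))" "list_all2 beta_star Ms Ms1"
    using beta_joinable_hnf[OF assms(1,2)] by blast
  obtain D where D: "beta_star (absn n (apps (Var y) Ms1)) D" "beta_star (absn n' (apps (Var y') Ms')) D"
    using beta_star_confluent[OF Ms1(1) assms(3)] by blast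
  obtain Ms2 where D1: "D = absn n (apps (Var y) Ms2)" "list_all2 beta_star Ms1 Ms2"
    using beta_star_hnf_inv[OF D(1)] by blast
  obtain Ms3 where D2: "D = absn n' (apps (Var y') Ms3)" "list_all2 beta_star Ms' Ms3"
    using beta_star_hnf_inv[OF D(2)] by blast
  have eq: "n' = n" "y' = y" "Ms3 = Ms2" using hnf_eqD[of n y Ms2 n' y' Ms3] D1 D2 by auto
  have "list_all2 beta_star Ms Ms2"
    using Ms1(2) D1(2) by (blast intro: list_all2_trans rtranclp_trans)
  then have "list_all2 beta_joinable Ms Ms'" using D2(2) eq(3)
    by (fastforce simp: list_all2_conv_all_nth beta_joinable_def)
  then show ?thesis using eq by simp
qed

lemma hnf_data_SomeD:
  assumes "hnf_data A = Some (n, y, Ms)"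
  shows "beta_star A (absn n (apps (Var y) Ms))"
proof -
  define P where "P = (\<lambda>(n, y, Ms). beta_star A (absn n (apps (Var y) Ms)))"
  have ex: "\<exists>n y Ms. beta_star A (absn n (apps (Var y) Ms))"
    using assms by (rule contrapos_pp) (simp add: hnf_data_def)
  then have "hnf_data A = Some (Eps P)" by (simp add: hnf_data_def P_def)
  then have "Eps P = (n, y, Ms)" using assms by simp
  moreover have "P (Eps P)"
  proof -
    obtain n0 y0 Ms0 where "beta_star A (absn n0 (apps (Var y0) Ms0))" using ex by blast
    then show ?thesis by (intro someI[of P "(n0, y0, Ms0)"]) (simp add: P_def)
  qed
  ultimately show ?thesis by (simp add: P_def)
qed

lemma hnf_data_Some_if:
  assumes "beta_star A (absn n (apps (Var y) Ms))"
  shows "\<exists>n' y' Ms'. hnf_data A = Some (n', y', Ms')"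
proof -
  have "\<exists>n y Ms. beta_star A (absn n (apps (Var y) Ms))" using assms by blast
  then have "hnf_data A \<noteq> None" by (simp add: hnf_data_def)
  then obtain d where "hnf_data A = Some d" by blast
  then show ?thesis by (cases d) auto
qed

lemma BT_eq_NodeI: "hnf_data A = Some (n, y, Ms) \<Longrightarrow> BT A = Node n y (map BT Ms)"
  by (subst BT.code) simp

lemma BT_eq_NodeD: "BT A = Node n y Us \<Longrightarrow> \<exists>Ms. hnf_data A = Some (n, y, Ms) \<and> Us = map BT Ms"
  by (subst (asm) BT.code) (auto split: option.splits)

primcorec ren_bt :: "(nat \<Rightarrow> nat) \<Rightarrow> bt \<Rightarrow> bt" where
  "ren_bt f U = (case U of Bot \<Rightarrow> Bot
     | Node n y Us \<Rightarrow> Node n (ren_under n f y) (map (ren_bt (ren_under n f)) Us))"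

lemma ren_bt_simps [simp]:
  "ren_bt f Bot = Bot"
  "ren_bt f (Node n y Us) = Node n (ren_under n f y) (map (ren_bt (ren_under n f)) Us)"
  by (subst ren_bt.code; simp)+

lemma shift_bt_simps [simp]:
  "shift_bt c d Bot = Bot"
  "shift_bt c d (Node n y Us) = Node n (if y < c + n then y else y + d) (map (shift_bt (c + n) d) Us)"
  by (subst shift_bt.code; simp)+

definition shift_ren :: "nat \<Rightarrow> nat \<Rightarrow> nat \<Rightarrow> nat" where
  "shift_ren c d k = (if k < c then k else k + d)"

lemma ren_under_shift_ren: "ren_under n (shift_ren c d) = shift_ren (c + n) d"
  by (auto simp: fun_eq_iff ren_under_def shift_ren_def)

lemma shift_bt_eq_ren_bt: "shift_bt c d U = ren_bt (shift_ren c d) U"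
proof (coinduction arbitrary: c U rule: bt.coinduct)
  case Eq_bt
  show ?case
    by (cases U) (auto simp: ren_under_shift_ren list.rel_map shift_ren_def intro!: list.rel_refl_strong)
qed

lemma ren_bt_ren_bt: "ren_bt f (ren_bt g U) = ren_bt (f \<circ> g) U"
proof (coinduction arbitrary: f g U rule: bt.coinduct)
  case Eq_bt
  show ?case
    by (cases U) (auto simp: ren_under_comp[symmetric] list.rel_map intro!: list.rel_refl_strong)
qed

lemma ren_bt_id [simp]: "ren_bt id U = U"
proof (coinduction arbitrary: U rule: bt.coinduct)
  case Eq_bt
  show ?case by (cases U) (auto simp: list.rel_map intro!: list.rel_refl_strong)
qed

lemma shift_bt_0 [simp]: "shift_bt c 0 = (\<lambda>U. U)"
proof
  fix U
  have "shift_ren c 0 = id" by (auto simp: shift_ren_def fun_eq_iff)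
  then show "shift_bt c 0 U = U" by (simp add: shift_bt_eq_ren_bt)
qed

lemma bt_le_eta_refl: "bt_le_eta p U U"
proof (coinduction arbitrary: U rule: bt_le_eta.coinduct)
  case (bt_le_eta U)
  show ?case
  proof (cases U)
    case (Node n y Us)
    show ?thesis unfolding Node
      by (rule disjI2, rule exI[of _ 0], rule exI[of _ Us], rule exI[of _ Us],
          rule exI[of _ "[]"], rule exI[of _ n], rule exI[of _ y])
         (simp_all add: list_all2_conv_all_nth)
  qed simp
qed

section \<open>Transfer of eta-expansions along the refinement\<close>

text \<open>The induction invariant. \<open>X\<close> is \<open>\<lambda>z. A0\<close> with \<open>z\<close> the free variable \<open>j\<close> of \<open>A0\<close>;
  the injective renaming \<open>\<phi>\<close> makes this form stable under passing to the arguments of a head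
  normal form. \<open>A\<close> need only be beta-joinable with \<open>A0\<close>, since \<open>BT\<close> picks an arbitrary head
  normal form, and \<open>A'\<close> realises \<open>V\<close> only up to the renaming \<open>f\<close>, which accumulates the index
  shifts in the definition of \<open>bt_le_eta\<close>.\<close>

definition eta_transfer :: "nat \<Rightarrow> lterm \<Rightarrow> nat \<Rightarrow> bool" where
  "eta_transfer p' X s \<longleftrightarrow> (\<forall>\<phi> A0 j A V A' f.
     X = Abs (rename \<phi> A0) \<longrightarrow> inj \<phi> \<longrightarrow> (\<forall>k. \<phi> k = 0 \<longleftrightarrow> k = j) \<longrightarrow>
     beta_joinable A0 A \<longrightarrow> bt_le_eta p' (BT A) V \<longrightarrow> BT A' = ren_bt f V \<longrightarrow>
     (\<exists>s'. s' \<le> s + p' \<and> esize (abstract_var (f j) A') s' \<and> betaeta_star A' (Var (f j))))"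

lemma eta_transferD:
  assumes "eta_transfer p' (Abs (rename \<phi> A0)) s" and "inj \<phi>" and "\<And>k. \<phi> k = 0 \<longleftrightarrow> k = j"
    and "beta_joinable A0 A" and "bt_le_eta p' (BT A) V" and "BT A' = ren_bt f V"
  obtains s' where "s' \<le> s + p'" and "esize (abstract_var (f j) A') s'"
    and "betaeta_star A' (Var (f j))"
  using assms unfolding eta_transfer_def by blast

lemma beta_star_Abs_rename_hnf:
  assumes "beta_star (Abs (rename \<phi> A0)) (absn (Suc n) (apps (Var n) Qs))"
    and "\<forall>k. \<phi> k = 0 \<longleftrightarrow> k = j"
  shows "\<exists>Qs0. beta_star A0 (absn n (apps (Var (n + j)) Qs0)) \<and> Qs = map (rename (ren_under n \<phi>)) Qs0"
proof -
  have "beta_star (rename \<phi> A0) (absn n (apps (Var n) Qs))"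
    using beta_star_Abs_inv assms(1) by (fastforce simp: absn_Suc)
  then obtain B0 where B0: "beta_star A0 B0" "absn n (apps (Var n) Qs) = rename \<phi> B0"
    using beta_star_from_rename by blast
  then obtain C0 where C0: "B0 = absn n C0" "apps (Var n) Qs = rename (ren_under n \<phi>) C0"
    using rename_eq_absnD[of \<phi> B0 n "apps (Var n) Qs"] by auto
  then obtain w Qs0 where
    w: "C0 = apps (Var w) Qs0" "ren_under n \<phi> w = n" "Qs = map (rename (ren_under n \<phi>)) Qs0"
    using rename_eq_apps_VarD[of "ren_under n \<phi>" C0 n Qs] by auto
  have "w = n + j"
    using w(2) assms(2) by (cases "w < n") (auto simp: ren_under_def)
  then show ?thesis using B0 C0 w by auto
qed

lemma hnf_data_joinable_Abs_rename:
  assumes "beta_star (Abs (rename \<phi> A0)) (absn (Suc n) (apps (Var n) Qs))"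
    and "\<forall>k. \<phi> k = 0 \<longleftrightarrow> k = j" and "beta_joinable A0 A"
  obtains Qs0 Ms where "Qs = map (rename (ren_under n \<phi>)) Qs0"
    and "hnf_data A = Some (n, n + j, Ms)" and "list_all2 beta_joinable Qs0 Ms"
proof -
  obtain Qs0 where hA0: "beta_star A0 (absn n (apps (Var (n + j)) Qs0))"
      and Qs: "Qs = map (rename (ren_under n \<phi>)) Qs0"
    using beta_star_Abs_rename_hnf[OF assms(1,2)] by blast
  obtain Ms1 where "beta_star A (absn n (apps (Var (n + j)) Ms1))"
    using beta_joinable_hnf[OF hA0 assms(3)] by blast
  then obtain n' y' Ms where hd: "hnf_data A = Some (n', y', Ms)"
    using hnf_data_Some_if by blast
  then have "n' = n \<and> y' = n + j \<and> list_all2 beta_joinable Qs0 Ms"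
    using beta_joinable_hnf_unique[OF hA0 assms(3) hnf_data_SomeD] by blast
  then show thesis using that Qs hd by blast
qed

lemma bt_le_eta_Node_realised:
  assumes "bt_le_eta p (Node n y Us) V" and "BT A' = ren_bt f V"
  obtains m Ws Qn Ms' where "m \<le> p" and "list_all2 (bt_le_eta p) Us Ws"
    and "\<forall>i<m. \<exists>Q'. Qn ! i = BT Q' \<and> abstract_var (m - 1 - i) Q' \<in> E_p p"
    and "beta_star A' (absn (n + m) (apps (Var (ren_under (n + m) f (y + m))) Ms'))"
    and "length Ms' = length Us + m"
    and "\<And>i. i < length Us \<Longrightarrow> BT (Ms' ! i) = ren_bt (ren_under (n + m) f \<circ> shift_ren 0 m) (Ws ! i)"
    and "\<And>i. i < m \<Longrightarrow> BT (Ms' ! (length Us + i)) = ren_bt (ren_under (n + m) f) (Qn ! i)"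
proof -
  from assms(1) obtain m Ws Qn where
      V: "V = Node (n + m) (y + m) (map (shift_bt 0 m) Ws @ Qn)" and m: "m \<le> p"
      and lenW: "length Ws = length Us" and le: "list_all2 (bt_le_eta p) Us Ws"
      and lenQn: "length Qn = m"
      and Qn: "\<forall>i<m. \<exists>Q'. Qn ! i = BT Q' \<and> abstract_var (m - 1 - i) Q' \<in> E_p p"
    by (cases rule: bt_le_eta.cases) auto
  let ?F = "ren_under (n + m) f"
  obtain Ms' where hd: "hnf_data A' = Some (n + m, ?F (y + m), Ms')"
      and Ms': "map (ren_bt ?F) (map (shift_bt 0 m) Ws @ Qn) = map BT Ms'"
    using BT_eq_NodeD assms(2) V by fastforce
  have lenMs': "length Ms' = length Us + m"
    using arg_cong[OF Ms', of length] lenW lenQn by simp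
  have BT_Ms': "BT (Ms' ! i) = map (ren_bt ?F) (map (shift_bt 0 m) Ws @ Qn) ! i"
    if "i < length Ms'" for i
    using Ms' that by simp
  show thesis
  proof (rule that[OF m le Qn hnf_data_SomeD[OF hd] lenMs'])
    fix i assume "i < length Us"
    then show "BT (Ms' ! i) = ren_bt (?F \<circ> shift_ren 0 m) (Ws ! i)"
      using BT_Ms'[of i] lenMs' lenW by (simp add: nth_append shift_bt_eq_ren_bt ren_bt_ren_bt)
  next
    fix i assume "i < m"
    then show "BT (Ms' ! (length Us + i)) = ren_bt ?F (Qn ! i)"
      using BT_Ms'[of "length Us + i"] lenMs' lenW lenQn by (simp add: nth_append)
  qed
qed


lemma betaeta_star_Var_if_hnf:
  assumes "beta_star A (absn k (apps (Var (k + y)) Ms))" and "length Ms = k"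
    and "\<forall>i<k. betaeta_star (Ms ! i) (Var (k - 1 - i))"
  shows "betaeta_star A (Var y)"
proof -
  have "list_all2 betaeta_star Ms (map (\<lambda>i. Var (k - 1 - i)) [0..<k])"
    using assms(2,3) by (simp add: list_all2_conv_all_nth)
  then have "betaeta_star (absn k (apps (Var (k + y)) Ms))
      (absn k (apps (Var (k + y)) (map (\<lambda>i. Var (k - 1 - i)) [0..<k])))"
    by (intro betaeta_star_absn betaeta_star_apps)
  then show ?thesis
    using betaeta_star_of_beta_star[OF assms(1)] eta_expansion_Var by (blast intro: rtranclp_trans)
qed

lemma esize_abstract_var_if_hnf:
  assumes "beta_star A (absn k (apps (Var (k + y)) Ms))" and "length Ms = k"
    and "\<forall>i<k. esize (abstract_var (k - 1 - i) (Ms ! i)) (sz i)"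
  shows "esize (abstract_var y A) (max k (Max (insert 0 (Suc ` set (map sz [0..<k])))))"
proof -
  define G where "G = ren_under k (abs_ren y)"
  have "G (k + y) = k" by (simp add: G_def ren_under_def abs_ren_def)
  then have "beta_star (rename (abs_ren y) A) (absn k (apps (Var k) (map (rename G) Ms)))"
    using beta_star_rename[OF assms(1), of "abs_ren y"] by (simp add: rename_absn rename_apps G_def)
  then have red: "beta_star (abstract_var y A) (absn (Suc k) (apps (Var k) (map (rename G) Ms)))"
    by (simp add: abstract_var_abs_ren absn_Suc beta_star_Abs)
  have kids: "\<forall>i<k. esize (abstract_var (k - 1 - i) (map (rename G) Ms ! i)) (map sz [0..<k] ! i)"
  proof (intro allI impI)
    fix i assume i: "i < k"
    have "esize (Abs (rename (abs_ren (k - 1 - i)) (Ms ! i))) (sz i)"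
      using assms(3) i by (simp add: abstract_var_abs_ren)
    then have "esize (Abs (rename (abs_ren (k - 1 - i) \<circ> G) (Ms ! i))) (sz i)"
      by (rule esize_Abs_rename_cong[OF _ inj_abs_ren])
         (use i in \<open>auto simp: abs_ren_def G_def ren_under_def\<close>)
    then show "esize (abstract_var (k - 1 - i) (map (rename G) Ms ! i)) (map sz [0..<k] ! i)"
      using i assms(2) by (simp add: abstract_var_abs_ren rename_comp)
  qed
  show ?thesis by (rule esize.esize_exp[OF red _ _ kids]) (simp_all add: assms(2))
qed

lemma eta_expansion_if_hnf:
  assumes hnf: "beta_star A (absn k (apps (Var (k + y)) Ms))" and len: "length Ms = k" and "k \<le> b"
    and kids: "\<And>i. i < k \<Longrightarrow> \<exists>s. Suc s \<le> b \<and> esize (abstract_var (k - 1 - i) (Ms ! i)) s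
      \<and> betaeta_star (Ms ! i) (Var (k - 1 - i))"
  shows "\<exists>s. s \<le> b \<and> esize (abstract_var y A) s \<and> betaeta_star A (Var y)"
proof -
  have "\<forall>i. \<exists>s. i < k \<longrightarrow> Suc s \<le> b
      \<and> esize (abstract_var (k - 1 - i) (Ms ! i)) s \<and> betaeta_star (Ms ! i) (Var (k - 1 - i))"
    using kids by blast
  from choice[OF this] obtain sz where sz: "\<forall>i<k. Suc (sz i) \<le> b
      \<and> esize (abstract_var (k - 1 - i) (Ms ! i)) (sz i) \<and> betaeta_star (Ms ! i) (Var (k - 1 - i))"
    by blast
  have "esize (abstract_var y A) (max k (Max (insert 0 (Suc ` set (map sz [0..<k])))))"
    using sz by (intro esize_abstract_var_if_hnf[OF hnf len]) auto
  moreover have "betaeta_star A (Var y)"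
    using sz by (intro betaeta_star_Var_if_hnf[OF hnf len]) auto
  moreover have "max k (Max (insert 0 (Suc ` set (map sz [0..<k])))) \<le> b"
    using sz assms(3) by auto
  ultimately show ?thesis by blast
qed

lemma esize_inserted_expansion:
  assumes "\<And>X s. esize X s \<Longrightarrow> eta_transfer 0 X s"
    and "abstract_var a Q \<in> E_p p" and "BT B = ren_bt (ren_under k f) (BT Q)" and "a < k"
  shows "\<exists>s. s < p \<and> esize (abstract_var a B) s \<and> betaeta_star B (Var a)"
proof -
  obtain s where s: "esize (abstract_var a Q) s" "s < p" using assms(2) by (auto simp: E_p_def)
  have "eta_transfer 0 (Abs (rename (abs_ren a) Q)) s"
    using assms(1)[OF s(1)] by (simp add: abstract_var_abs_ren)
  then obtain s' where "s' \<le> s" "esize (abstract_var (ren_under k f a) B) s'"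
    "betaeta_star B (Var (ren_under k f a))"
    by (rule eta_transferD[OF _ inj_abs_ren abs_ren_eq_0_iff beta_joinable_refl bt_le_eta_refl assms(3)])
      simp
  moreover have "ren_under k f a = a" using assms(4) by (simp add: ren_under_def)
  ultimately show ?thesis using s(2) by (intro exI[of _ s']) simp
qed


lemma esize_refined_child:
  assumes "eta_transfer p' (abstract_var (n - 1 - i) (rename (ren_under n \<phi>) B0)) s"
    and "i < n" and "inj \<phi>" and "beta_joinable B0 B" and "bt_le_eta p' (BT B) W"
    and "BT B' = ren_bt (ren_under (n + m) f \<circ> shift_ren 0 m) W"
  shows "\<exists>s'. s' \<le> s + p' \<and> esize (abstract_var (n + m - 1 - i) B') s'
    \<and> betaeta_star B' (Var (n + m - 1 - i))"
proof -
  define \<phi>' where "\<phi>' = abs_ren (n - 1 - i) \<circ> ren_under n \<phi>"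
  have "eta_transfer p' (Abs (rename \<phi>' B0)) s"
    using assms(1) by (simp add: abstract_var_abs_ren rename_comp \<phi>'_def)
  moreover have "inj \<phi>'"
    unfolding \<phi>'_def by (rule inj_compose[OF inj_abs_ren inj_ren_under[OF assms(3)]])
  moreover have "\<phi>' k = 0 \<longleftrightarrow> k = n - 1 - i" for k
    using assms(2) by (auto simp: \<phi>'_def abs_ren_def ren_under_def)
  ultimately obtain s' where "s' \<le> s + p'"
    "esize (abstract_var ((ren_under (n + m) f \<circ> shift_ren 0 m) (n - 1 - i)) B') s'"
    "betaeta_star B' (Var ((ren_under (n + m) f \<circ> shift_ren 0 m) (n - 1 - i)))"
    by (rule eta_transferD[OF _ _ _ assms(4-6)])
  moreover have "(ren_under (n + m) f \<circ> shift_ren 0 m) (n - 1 - i) = n + m - 1 - i"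
    using assms(2) by (simp add: ren_under_def shift_ren_def)
  ultimately show ?thesis by auto
qed

lemma eta_transfer_hnf:
  assumes red: "beta_star X (absn (Suc n) (apps (Var n) Qs))"
    and lenQ: "length Qs = n" and lens: "length ss = n"
    and IH: "\<forall>i<n. eta_transfer p' (abstract_var (n - 1 - i) (Qs ! i)) (ss ! i)"
    and inserted: "0 < p' \<Longrightarrow> (\<And>X s. esize X s \<Longrightarrow> eta_transfer 0 X s)"
  shows "eta_transfer p' X (max n (Max (insert 0 (Suc ` set ss))))"
  unfolding eta_transfer_def
proof (intro allI impI)
  fix \<phi> A0 j A V A' f
  assume X: "X = Abs (rename \<phi> A0)" and inj: "inj \<phi>" and \<phi>0: "\<forall>k. \<phi> k = 0 \<longleftrightarrow> k = j"
    and joinable: "beta_joinable A0 A" and le: "bt_le_eta p' (BT A) V" and A': "BT A' = ren_bt f V"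
  define S where "S = max n (Max (insert 0 (Suc ` set ss)))"
  obtain Qs0 Ms where Qs: "Qs = map (rename (ren_under n \<phi>)) Qs0"
      and hd: "hnf_data A = Some (n, n + j, Ms)" and jMs: "list_all2 beta_joinable Qs0 Ms"
    using hnf_data_joinable_Abs_rename[OF red[unfolded X] \<phi>0 joinable] .
  have lenMs: "length Ms = n" using jMs Qs lenQ by (simp add: list_all2_lengthD)
  have le_Node: "bt_le_eta p' (Node n (n + j) (map BT Ms)) V" using le BT_eq_NodeI[OF hd] by simp
  obtain m Ws Qn Ms' where m: "m \<le> p'" and leW: "list_all2 (bt_le_eta p') (map BT Ms) Ws"
    and Qn: "\<forall>i<m. \<exists>Q'. Qn ! i = BT Q' \<and> abstract_var (m - 1 - i) Q' \<in> E_p p'"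
    and hA': "beta_star A' (absn (n + m) (apps (Var (ren_under (n + m) f (n + j + m))) Ms'))"
    and lenMs': "length Ms' = length (map BT Ms) + m"
    and BT1: "\<And>i. i < length (map BT Ms) \<Longrightarrow>
      BT (Ms' ! i) = ren_bt (ren_under (n + m) f \<circ> shift_ren 0 m) (Ws ! i)"
    and BT2: "\<And>i. i < m \<Longrightarrow> BT (Ms' ! (length (map BT Ms) + i)) = ren_bt (ren_under (n + m) f) (Qn ! i)"
    by (rule bt_le_eta_Node_realised[OF le_Node A']) blast
  have "\<exists>s'. Suc s' \<le> S + p' \<and> esize (abstract_var (n + m - 1 - i) (Ms' ! i)) s'
      \<and> betaeta_star (Ms' ! i) (Var (n + m - 1 - i))" if "i < n + m" for i
  proof (cases "i < n")
    case True
    have S: "Suc (ss ! i) \<le> S" using True lens by (auto simp: S_def le_max_iff_disj Max_ge_iff)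
    have "\<exists>s'. s' \<le> ss ! i + p' \<and> esize (abstract_var (n + m - 1 - i) (Ms' ! i)) s'
        \<and> betaeta_star (Ms' ! i) (Var (n + m - 1 - i))"
    proof (rule esize_refined_child[OF _ True inj])
      show "eta_transfer p' (abstract_var (n - 1 - i) (rename (ren_under n \<phi>) (Qs0 ! i))) (ss ! i)"
        using IH True lenQ Qs by auto
      show "beta_joinable (Qs0 ! i) (Ms ! i)" and "bt_le_eta p' (BT (Ms ! i)) (Ws ! i)"
        using jMs leW True lenMs by (auto simp: list_all2_conv_all_nth)
      show "BT (Ms' ! i) = ren_bt (ren_under (n + m) f \<circ> shift_ren 0 m) (Ws ! i)"
        using BT1 True lenMs by simp
    qed
    then obtain s' where "s' \<le> ss ! i + p'" "esize (abstract_var (n + m - 1 - i) (Ms' ! i)) s'"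
      "betaeta_star (Ms' ! i) (Var (n + m - 1 - i))"
      by blast
    then show ?thesis using S by (intro exI[of _ s']) auto
  next
    case False
    define i' where "i' = i - n"
    have i': "i = n + i'" "i' < m" using False that by (auto simp: i'_def)
    obtain Q' where Q': "Qn ! i' = BT Q'" "abstract_var (m - 1 - i') Q' \<in> E_p p'"
      using Qn i'(2) by blast
    have "\<exists>s'. s' < p' \<and> esize (abstract_var (m - 1 - i') (Ms' ! i)) s'
        \<and> betaeta_star (Ms' ! i) (Var (m - 1 - i'))"
    proof (rule esize_inserted_expansion[OF inserted Q'(2)])
      show "0 < p'" using i' m by simp
      show "BT (Ms' ! i) = ren_bt (ren_under (n + m) f) (BT Q')"
        using BT2[OF i'(2)] Q'(1) i'(1) lenMs by simp
      show "m - 1 - i' < n + m" using i'(2) by simp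
    qed
    moreover have "m - 1 - i' = n + m - 1 - i" using i' by simp
    ultimately show ?thesis by (metis Suc_leI trans_le_add2)
  qed
  moreover have "beta_star A' (absn (n + m) (apps (Var (n + m + f j)) Ms'))"
    using hA' by (simp add: ren_under_def add.commute add.left_commute)
  ultimately show "\<exists>s'. s' \<le> max n (Max (insert 0 (Suc ` set ss))) + p'
      \<and> esize (abstract_var (f j) A') s' \<and> betaeta_star A' (Var (f j))"
    using eta_expansion_if_hnf[where b = "S + p'"] lenMs' lenMs m unfolding S_def by simp
qed


text \<open>The eta-expansions inserted by a refinement are handled by the instance \<open>p' = 0\<close>, for
  which a refinement inserts nothing; this is why the hypothesis is only needed when \<open>0 < p'\<close>.\<close>

lemma eta_transfer_if_esize:
  assumes "esize X s" and "0 < p' \<Longrightarrow> (\<And>X s. esize X s \<Longrightarrow> eta_transfer 0 X s)"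
  shows "eta_transfer p' X s"
  using assms(1)
proof (induction rule: esize.induct)
  case (esize_id Q)
  have "Id_term = absn (Suc 0) (apps (Var 0) [])" by (simp add: Id_term_def absn_Suc)
  then have "eta_transfer p' Q (max 0 (Max (insert 0 (Suc ` set ([] :: nat list)))))"
    using esize_id assms(2) by (intro eta_transfer_hnf[where Qs="[]"]) auto
  then show ?case by simp
next
  case (esize_exp Q m Qs ss)
  then show ?case using assms(2) by (intro eta_transfer_hnf) auto
qed

lemma eta_transfer_0: "esize X s \<Longrightarrow> eta_transfer 0 X s"
  by (rule eta_transfer_if_esize) simp_all

lemma eta_transfer: "esize X s \<Longrightarrow> eta_transfer p' X s"
  using eta_transfer_if_esize eta_transfer_0 by blast

theorem mainTheorem16:
  fixes p p' :: nat and Q Q' :: lterm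
  assumes "Abs Q \<in> E_p p"
    and "bt_le_eta p' (BT Q) (BT Q')"
  shows "Abs Q' \<in> E_p (p + p')"
proof -
  obtain s where s: "esize (Abs Q) s" "s < p" using assms(1) by (auto simp: E_p_def)
  obtain s' where s': "s' \<le> s + p'" "esize (abstract_var 0 Q') s'" "betaeta_star Q' (Var 0)"
    using eta_transferD[OF _ inj_on_id _ beta_joinable_refl assms(2), where j = 0 and A' = Q' and f = id]
      eta_transfer[OF s(1)]
    by auto
  have "esize (Abs (rename id Q')) s'"
    using s'(2) unfolding abstract_var_abs_ren
    by (rule esize_Abs_rename_cong[OF _ inj_abs_ren]) (simp add: abs_ren_eq_0_iff)
  moreover have "betaeta_star (Abs Q') Id_term"
    using betaeta_star_Abs[OF s'(3)] by (simp add: Id_term_def)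
  ultimately show ?thesis using s'(1) s(2) by (auto simp: E_p_def E_def)
qed

end
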